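(* Let $n$ be a nonnegative integer and let $q$, $a$, $z$ be indeterminates (equivalently, generic complex numbers such that no denominator below vanishes), with $a^{1/2}$ a fixed square root of $a$. Then the following two identities hold: \[ \frac{(q^{z+2};q^2)_n\,(a^{-1}q^{2-z};q^2)_n}{(q;q^2)_n\,(a^{-1}q^3;q^2)_n} =\sum_{k=0}^n \frac{(q^{-n};q)_k\,(-q^{-n};q)_k\,(q^{z+1};q)_k\,(a^{-1}q^{1-z};q)_k} {(q;q)_k\,(q^{-2n};q)_k\,(a^{-1/2}q^{3/2};q)_k\,(-a^{-1/2}q^{3/2};q)_k}\,q^k, \] and \[ \frac{(q^{z+2};q^2)_n\,(aq^{z-2n};q^2)_n}{(q^{z+1};q)_n\,(aq^{z-n};q)_n} =\sum_{k=0}^n \frac{(q^{-n};q)_k\,(q^{n+1};q)_k\,(a^{1/2}q^{-n-1/2};q)_k\,(-a^{1/2}q^{-n-1/2};q)_k} {(q;q)_k\,(-q;q)_k\,(q^{-z-n};q)_k\,(aq^{z-n};q)_k}\,q^k. \]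
   Context: For a variable $u$, a base $p$ and a nonnegative integer $n$, the shifted factorial is $(u;p)_0=1$ and $(u;p)_n=(1-u)(1-up)\cdots(1-up^{n-1})$; it is used here with bases $p=q$ and $p=q^2$. Powers such as $q^{z}$ and $q^{1/2}$ are understood formally (i.e., $q^{z}$ and $q^{1/2}$ are treated as variables). *)

theory Defs
  imports Complex_Main
begin

definition qpoch :: "complex \<Rightarrow> complex \<Rightarrow> nat \<Rightarrow> complex" where
  "qpoch u p n = (\<Prod>i<n. 1 - u * p ^ i)"

end

theory Submission imports Defs begin

text \<open>Both sides of each identity satisfy, as functions of \<open>n\<close>, the same first-order recurrence
  and agree at \<open>n = 0\<close>.  For the products the recurrence is read off directly.  For the terminating
  sums it comes from creative telescoping: writing \<open>x = q\<^sup>n\<close>, the summand \<open>F x k\<close> is rational in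
  \<open>x\<close> and \<open>q\<^sup>k\<close>, and a rational certificate turns \<open>F (x q) k - c(x) F x k\<close> into a difference
  \<open>G (k + 1) - G k\<close>; summing over \<open>k\<close> telescopes, because \<open>F x (n + 1) = 0\<close> through the factor
  \<open>(q\<^sup>-\<^sup>n; q)\<^sub>n\<^sub>+\<^sub>1\<close>.\<close>

lemma qpoch_0 [simp]: "qpoch u p 0 = 1"
  by (simp add: qpoch_def)

lemma qpoch_Suc: "qpoch u p (Suc k) = qpoch u p k * (1 - u * p ^ k)"
  by (simp add: qpoch_def)

lemma qpoch_Suc_shift: "qpoch u p (Suc k) = (1 - u) * qpoch (u * p) p k"
  unfolding qpoch_def by (subst prod.lessThan_Suc_shift) (simp add: mult.assoc power_Suc)

lemma qpoch_nonzero_factor: "qpoch u p n \<noteq> 0 \<Longrightarrow> i < n \<Longrightarrow> 1 - u * p ^ i \<noteq> 0"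
  unfolding qpoch_def by (auto simp: prod_zero_iff)

lemma inverse_power_mult_power:
  fixes q :: complex
  assumes "q \<noteq> 0" "j \<le> m"
  shows "inverse (q ^ m) * q ^ j = inverse (q ^ (m - j))"
proof -
  obtain d where "m = j + d" using \<open>j \<le> m\<close> le_Suc_ex by blast
  then show ?thesis using \<open>q \<noteq> 0\<close> by (simp add: power_add field_simps)
qed

lemma power2_power: "((q::complex) ^ m) ^ 2 = q ^ (2 * m)"
  by (metis power_mult mult.commute)

lemma power_ne_1_if_qpoch_nonzero:
  fixes q :: complex
  assumes "q \<noteq> 0" "qpoch q q n \<noteq> 0" "qpoch (inverse (q ^ (2 * n))) q n \<noteq> 0"
    and "1 \<le> i" "i \<le> 2 * n"
  shows "q ^ i \<noteq> 1"
proof (cases "i \<le> n")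
  case True
  then have "1 - q * q ^ (i - 1) \<noteq> 0"
    using qpoch_nonzero_factor[OF assms(2), of "i - 1"] assms(4) by simp
  moreover have "q * q ^ (i - 1) = q ^ i" using assms(4) by (cases i) auto
  ultimately show ?thesis by simp
next
  case False
  then have "1 - inverse (q ^ (2 * n)) * q ^ (2 * n - i) \<noteq> 0"
    using qpoch_nonzero_factor[OF assms(3), of "2 * n - i"] assms(4,5) False by simp
  moreover have "inverse (q ^ (2 * n)) * q ^ (2 * n - i) = inverse (q ^ i)"
    using assms by (simp add: inverse_power_mult_power)
  ultimately show ?thesis by auto
qed

lemma sum_telescoping_certificate:
  fixes F0 F1 R :: "nat \<Rightarrow> 'a::comm_ring"
  assumes "F0 (Suc m) = 0"
    and "F1 0 - c * F0 0 = F0 0 * R 1"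
    and "\<And>j. j \<le> m \<Longrightarrow>
      F1 (Suc j) - c * F0 (Suc j) = F0 (Suc j) * R (Suc (Suc j)) - F0 j * R (Suc j)"
  shows "(\<Sum>k\<le>Suc m. F1 k) = c * (\<Sum>k\<le>m. F0 k)"
proof -
  define G where "G k = (if k = 0 then 0 else F0 (k - 1) * R k)" for k
  have "F1 k - c * F0 k = G (Suc k) - G k" if "k \<le> Suc m" for k
  proof (cases k)
    case (Suc j)
    then show ?thesis using that assms(3)[of j] by (simp add: G_def)
  qed (simp add: G_def assms(2))
  then have "(\<Sum>k\<le>Suc m. F1 k - c * F0 k) = (\<Sum>k<Suc (Suc m). G (Suc k) - G k)"
    by (simp add: lessThan_Suc_atMost[symmetric])
  also have "\<dots> = 0"
    by (subst sum_lessThan_telescope) (simp add: G_def assms(1))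
  finally have "(\<Sum>k\<le>Suc m. F1 k) - c * (\<Sum>k\<le>Suc m. F0 k) = 0"
    by (simp only: sum_subtractf sum_distrib_left)
  then have "(\<Sum>k\<le>Suc m. F1 k) = c * (\<Sum>k\<le>Suc m. F0 k)"
    by simp
  also have "(\<Sum>k\<le>Suc m. F0 k) = (\<Sum>k\<le>m. F0 k)"
    using assms(1) by simp
  finally show ?thesis .
qed

lemma telescoping_step_from_ratios:
  fixes t K A B C c P :: "'a::comm_ring"
  assumes "A - c * B = B * P - C"
  shows "t * (K * A) - c * (t * (K * B)) = t * (K * B) * P - t * (K * C)"
proof -
  have "t * (K * A) - c * (t * (K * B)) = t * K * (A - c * B)"
    by (simp add: algebra_simps)
  also have "\<dots> = t * K * (B * P - C)"
    using assms by simp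
  finally show ?thesis
    by (simp add: algebra_simps)
qed

lemma mult_quotient_regroup4:
  "((n1::complex) * a1) * (n2 * a2) * (n3 * a3) * (n4 * a4)
     / ((d1 * b1) * (d2 * b2) * (d3 * b3) * (d4 * b4)) * (q * y)
   = n1 * n2 * n3 * n4 / (d1 * d2 * d3 * d4) * y * (a1 * a2 * a3 * a4 * q / (b1 * b2 * b3 * b4))"
  by (simp add: divide_inverse inverse_mult_distrib mult_ac)

lemma mult_quotient_regroup2:
  "((A::complex) * a1) * (B * a2) / ((C * b1) * (D * b2)) = (a1 * a2 / (b1 * b2)) * (A * B / (C * D))"
  by (simp add: divide_inverse inverse_mult_distrib mult_ac)

definition lhs1 :: "complex \<Rightarrow> complex \<Rightarrow> complex \<Rightarrow> nat \<Rightarrow> complex" where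
  "lhs1 q a w n = qpoch (w * q^2) (q^2) n * qpoch (inverse a * q^2 * inverse w) (q^2) n
     / (qpoch q (q^2) n * qpoch (inverse a * q^3) (q^2) n)"

text \<open>In the summands, \<open>x\<close> stands for \<open>q\<^sup>n\<close> (so that \<open>n \<mapsto> n + 1\<close> becomes \<open>x \<mapsto> x q\<close>),
  \<open>e\<close> for \<open>a\<^sup>-\<^sup>1\<^sup>/\<^sup>2 q\<^sup>3\<^sup>/\<^sup>2\<close> and \<open>w\<close> for \<open>q\<^sup>z\<close>.\<close>

definition rhs1_term :: "complex \<Rightarrow> complex \<Rightarrow> complex \<Rightarrow> complex \<Rightarrow> complex \<Rightarrow> nat \<Rightarrow> complex" where
  "rhs1_term q a w e x k = qpoch (inverse x) q k * qpoch (- inverse x) q k * qpoch (w * q) q k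
     * qpoch (inverse a * q * inverse w) q k
     / (qpoch q q k * qpoch (inverse (x^2)) q k * qpoch e q k * qpoch (- e) q k) * q^k"

definition ratio1 :: "complex \<Rightarrow> complex \<Rightarrow> complex \<Rightarrow> complex \<Rightarrow> complex" where
  "ratio1 q a w x = (inverse (x^2) - w * q^2) * (w * inverse (x^2) - q^2 * inverse a)
     / (w * ((inverse (x^2) - q) * (inverse (x^2) - q^3 * inverse a)))"

lemma rhs1_term_Suc:
  assumes "x \<noteq> 0" "1 - q * q^j \<noteq> 0" "1 - inverse (x^2) * q^j \<noteq> 0"
    "1 - e * q^j \<noteq> 0" "1 - (-e) * q^j \<noteq> 0"
  shows "rhs1_term q a w e x (Suc j) = rhs1_term q a w e x j *
    (q * (1 - w * q * q^j) * (1 - inverse a * q * inverse w * q^j)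
       / ((1 - q * q^j) * (1 - e * q^j) * (1 - (-e) * q^j))
      * ((1 - inverse (x^2) * (q^j)^2) / (1 - inverse (x^2) * q^j)))"
proof -
  have regroup: "(1 - ix * y) * (1 - - ix * y) * A3 * A4 * q / (b1 * b2 * b3 * b4)
      = q * A3 * A4 / (b1 * b3 * b4) * ((1 - ix^2 * y^2) / b2)"
    if "b1 \<noteq> 0" "b2 \<noteq> 0" "b3 \<noteq> 0" "b4 \<noteq> 0" for ix y A3 A4 b1 b2 b3 b4 :: complex
    using that by (simp add: field_simps power2_eq_square)
  show ?thesis
    unfolding rhs1_term_def qpoch_Suc power_Suc mult_quotient_regroup4
    using assms by (subst regroup) (auto simp: power_inverse)
qed

lemma rhs1_term_shift_Suc:
  assumes "x \<noteq> 0" "q \<noteq> 0" "1 - q * q^j \<noteq> 0" "1 - e * q^j \<noteq> 0" "1 - (-e) * q^j \<noteq> 0"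
    "1 - inverse ((x*q)^2) \<noteq> 0" "1 - inverse ((x*q)^2) * q \<noteq> 0"
    "1 - inverse ((x*q)^2) * q * q^j \<noteq> 0"
  shows "rhs1_term q a w e (x*q) (Suc j) = rhs1_term q a w e x j *
    (q * (1 - w * q * q^j) * (1 - inverse a * q * inverse w * q^j)
       / ((1 - q * q^j) * (1 - e * q^j) * (1 - (-e) * q^j))
      * ((q - inverse (x^2) * q^j) / (q - inverse (x^2))))"
proof -
  let ?W = "inverse ((x*q)^2)"
  have shift_inv: "qpoch (inverse (x*q)) q (Suc j) = qpoch (inverse x) q j * (1 - inverse (x*q))"
    unfolding qpoch_Suc_shift using assms by (simp add: field_simps)
  have shift_neg_inv: "qpoch (- inverse (x*q)) q (Suc j) = qpoch (- inverse x) q j * (1 - - inverse (x*q))"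
    unfolding qpoch_Suc_shift using assms by (simp add: field_simps)
  have Wq2: "?W * q * q = inverse (x^2)"
    using assms by (simp add: field_simps power2_eq_square)
  have shift_W: "qpoch ?W q (Suc j) = qpoch (inverse (x^2)) q j * ((1 - ?W) * (1 - ?W*q) / (1 - ?W*q*q^j))"
  proof -
    have "qpoch (?W*q) q j * (1 - ?W*q*q^j) = (1 - ?W*q) * qpoch (inverse (x^2)) q j"
      using qpoch_Suc[of "?W*q" q j] qpoch_Suc_shift[of "?W*q" q j] Wq2 by simp
    then have "qpoch (?W*q) q j = (1 - ?W*q) * qpoch (inverse (x^2)) q j / (1 - ?W*q*q^j)"
      using assms(8) by (simp add: field_simps)
    then show ?thesis unfolding qpoch_Suc_shift by (simp add: field_simps)
  qed
  have regroup: "(1 - ixq) * (1 - - ixq) * A3 * A4 * q / (b1 * ((1-W) * (1-W*q) / (1-W*q*y)) * b3 * b4)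
      = q * A3 * A4 / (b1 * b3 * b4) * ((q - V * y) / (q - V))"
    if "q \<noteq> 0" "b1 \<noteq> 0" "b3 \<noteq> 0" "b4 \<noteq> 0" "1 - W \<noteq> 0" "1 - W*q \<noteq> 0" "1 - W*q*y \<noteq> 0"
      "W = ixq^2" "V = W * q^2"
    for ixq y V W A3 A4 b1 b3 b4 :: complex
  proof -
    have qV: "q - V = q * (1 - W*q)" using that(9) by (simp add: algebra_simps power2_eq_square)
    have W: "(1 - ixq) * (1 - - ixq) = 1 - W" using that(8) by (simp add: algebra_simps power2_eq_square)
    have "(1-W) * A3 * A4 * q / (b1 * (g2 * g3 / dl) * b3 * b4) = q * A3 * A4 / (b1 * b3 * b4) * ((q - V*y) / d4)"
      if "g2 \<noteq> 0" "g3 \<noteq> 0" "dl \<noteq> 0" "d4 \<noteq> 0"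
        and "g2 = 1-W" "g3 = 1-W*q" "dl = 1-W*q*y" "d4 = q*(1-W*q)" for g2 g3 dl d4
      using that(1-4) \<open>q \<noteq> 0\<close> \<open>b1 \<noteq> 0\<close> \<open>b3 \<noteq> 0\<close> \<open>b4 \<noteq> 0\<close>
      apply (simp add: field_simps)
      apply (unfold that(5-8))
      apply (thin_tac "_ \<noteq> _")+
      using \<open>V = W * q^2\<close> by algebra
    then show ?thesis
      unfolding qV W using that(1-7) by simp
  qed
  show ?thesis
    unfolding rhs1_term_def shift_inv shift_neg_inv shift_W
    unfolding qpoch_Suc power_Suc mult_quotient_regroup4
    using assms by (subst regroup) (auto simp: power_inverse power_mult_distrib)
qed

lemma rhs1_term_vanishes: "x = q^m \<Longrightarrow> q \<noteq> 0 \<Longrightarrow> rhs1_term q a w e x (Suc m) = 0"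
  unfolding rhs1_term_def by (simp add: qpoch_Suc)

text \<open>A q-Zeilberger certificate: with \<open>F x k = rhs1_term q a w e x k\<close>, the function
  \<open>G k = F x (k - 1) \<cdot> cert1 q a w x (q\<^sup>k)\<close> satisfies
  \<open>F (x q) k - ratio1 q a w x \<cdot> F x k = G (k + 1) - G k\<close>.  In the identities verifying it (and its
  analogue \<open>cert2\<close>) the denominators are kept abstract, so that clearing them with \<open>field_simps\<close>
  leaves a polynomial identity for \<open>algebra\<close>.\<close>

definition cert1 :: "complex \<Rightarrow> complex \<Rightarrow> complex \<Rightarrow> complex \<Rightarrow> complex \<Rightarrow> complex" where
  "cert1 q a w x z = -(q^2 * inverse (x^2) * (1 - w*z) * (w - inverse a * z))
     / (w * ((inverse (x^2) - q) * (inverse (x^2) - q^3 * inverse a)) * z)"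

lemma cert1_initial_identity:
  fixes q V b w d1 d2 :: complex
  assumes "q \<noteq> 0" "V \<noteq> 0" "b \<noteq> 0" "w \<noteq> 0" "d1 \<noteq> 0" "d2 \<noteq> 0"
    and "d1 = V - q" "d2 = V - q^3*b"
  shows "1 - (V-w*q^2)*(w*V-q^2*b)/(w*(d1*d2)) = -(q^2*V*(1-w*q)*(w-b*q))/(w*(d1*d2)*q)"
  using assms(1-6)
  apply (simp add: field_simps)
  apply (unfold assms(7,8))
  apply (thin_tac "_ \<noteq> _")+
  apply algebra
  done

lemma cert1_telescoping_identity:
  fixes q V y b w d1 d2 d3 d4 :: complex
  assumes "q \<noteq> 0" "V \<noteq> 0" "y \<noteq> 0" "b \<noteq> 0" "w \<noteq> 0"
    and "d1 \<noteq> 0" "d2 \<noteq> 0" "d3 \<noteq> 0" "d4 \<noteq> 0"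
    and "d1 = V - q" "d2 = V - q^3*b" "d3 = 1 - V*y" "d4 = q - V"
  shows "(q-V*y)/d4 - ((V-w*q^2)*(w*V-q^2*b)/(w*(d1*d2))) * ((1-V*y^2)/d3)
   = ((1-V*y^2)/d3) * (-(q^2*V*(1-w*(q*q*y))*(w-b*(q*q*y)))/(w*(d1*d2)*(q*q*y)))
     - (-(q^2*V*(1-q*y)*(1-q^3*b*y^2))/((d1*d2)*(q^2*y)))"
  using assms(1-9)
  apply (simp add: field_simps)
  apply (unfold assms(10-13))
  apply (thin_tac "_ \<noteq> _")+
  apply algebra
  done

lemma cert1_final_identity:
  fixes q V x b d1 d2 d4 :: complex
  assumes "q \<noteq> 0" "x \<noteq> 0" "b \<noteq> 0" "d1 \<noteq> 0" "d2 \<noteq> 0" "d4 \<noteq> 0"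
    and "d1 = V - q" "d2 = V - q^3*b" "d4 = q - V" and "V*x^2 = 1"
  shows "(q-V*x)/d4 = - (-(q^2*V*(1-q*x)*(1-q^3*b*x^2))/((d1*d2)*(q^2*x)))"
  using assms(1-6)
  apply (simp add: field_simps)
  apply (unfold assms(7-9))
  apply (thin_tac "_ \<noteq> _")+
  using assms(10)
  apply algebra
  done

lemma cert1_shift_ratio:
  fixes q V y b w e d1 d2 b1 b3 b4 :: complex
  assumes "q \<noteq> 0" "y \<noteq> 0" "w \<noteq> 0" "d1 \<noteq> 0" "d2 \<noteq> 0" "b1 \<noteq> 0" "b3 \<noteq> 0" "b4 \<noteq> 0"
    and "d1 = V-q" "d2 = V-q^3*b" "b1 = 1-q*y" "b3 = 1-e*y" "b4 = 1-(-e)*y" and "e^2 = q^3*b"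
  shows "-(q^2*V*(1-w*(q*y))*(w-b*(q*y)))/(w*(d1*d2)*(q*y))
    = q*(1-w*q*y)*(1-b*q*inverse w*y)/(b1*b3*b4) * (-(q^2*V*(1-q*y)*(1-q^3*b*y^2))/((d1*d2)*(q^2*y)))"
  using assms(1-8)
  apply (simp add: field_simps)
  apply (unfold assms(9-13))
  apply (thin_tac "_ \<noteq> _")+
  using assms(14)
  apply algebra
  done

lemma rhs1_telescoping_step:
  fixes q a w e x :: complex and m j :: nat
  assumes x: "x = q^m" and jm: "j \<le> m" and nz: "q \<noteq> 0" "a \<noteq> 0" "w \<noteq> 0"
    and ee: "e^2 = q^3 * inverse a"
    and h1: "1 - q*q^j \<noteq> 0" and h2: "1 - e*q^j \<noteq> 0" and h3: "1 - (-e)*q^j \<noteq> 0"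
    and h4: "j < m \<Longrightarrow> 1 - inverse (x^2) * q^j \<noteq> 0"
    and h5: "inverse (x^2) - q \<noteq> 0" "inverse (x^2) - q^3 * inverse a \<noteq> 0"
    and h6: "1 - inverse ((x*q)^2) \<noteq> 0" "1 - inverse ((x*q)^2) * q \<noteq> 0"
    and h7: "1 - inverse ((x*q)^2) * q * q^j \<noteq> 0"
  shows "rhs1_term q a w e (x*q) (Suc j) - ratio1 q a w x * rhs1_term q a w e x (Suc j)
    = rhs1_term q a w e x (Suc j) * cert1 q a w x (q ^ Suc (Suc j))
      - rhs1_term q a w e x j * cert1 q a w x (q ^ Suc j)"
proof -
  define V where "V = inverse (x^2)"
  define c where "c = ratio1 q a w x"
  define P where "P = cert1 q a w x"
  define y where "y = q^j"
  define t where "t = rhs1_term q a w e x j"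
  define K where "K = q*(1-w*q*y)*(1-inverse a*q*inverse w*y)/((1-q*y)*(1-e*y)*(1-(-e)*y))"
  define A where "A = (q - V*y)/(q - V)"
  define C where "C = -(q^2*V*(1-q*y)*(1-q^3*inverse a*y^2))/(((V-q)*(V-q^3*inverse a))*(q^2*y))"
  have P: "P z = -(q^2*V*(1-w*z)*(w-inverse a*z))/(w*((V-q)*(V-q^3*inverse a))*z)" for z
    by (simp add: P_def V_def cert1_def)
  have c: "c = (V-w*q^2)*(w*V-q^2*inverse a)/(w*((V-q)*(V-q^3*inverse a)))"
    by (simp add: c_def ratio1_def V_def)
  have xnz: "x \<noteq> 0" using x nz by simp
  have ynz: "y \<noteq> 0" using nz by (simp add: y_def)
  have Vnz: "V \<noteq> 0" using xnz by (simp add: V_def)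
  have d1: "V - q \<noteq> 0" and d2: "V - q^3*inverse a \<noteq> 0" using h5 by (simp_all add: V_def)
  have "q - V = q * (1 - inverse ((x*q)^2) * q)"
    using nz xnz by (simp add: V_def field_simps power2_eq_square)
  then have d4: "q - V \<noteq> 0" using h6 nz by simp
  have shift: "rhs1_term q a w e (x*q) (Suc j) = t * (K * A)"
    unfolding t_def K_def A_def V_def y_def
    by (rule rhs1_term_shift_Suc) (use xnz nz h1 h2 h3 h6 h7 in auto)
  have cert: "P (q*y) = K * C"
    unfolding P K_def C_def
    by (rule cert1_shift_ratio[OF nz(1) ynz nz(3) d1 d2 _ _ _ refl refl refl refl refl ee])
      (use h1 h2 h3 in \<open>auto simp: y_def\<close>)
  have "\<exists>B. rhs1_term q a w e x (Suc j) = t * (K * B) \<and> A - c * B = B * P (q*q*y) - C"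
  proof (cases "j = m")
    case True
    then have yx: "y = x" using x y_def by simp
    have "A = - C"
      unfolding A_def C_def yx
      by (intro cert1_final_identity[OF nz(1) xnz _ d1 d2 d4 refl refl refl])
        (use nz xnz in \<open>auto simp: V_def\<close>)
    moreover have "rhs1_term q a w e x (Suc j) = 0"
      using True x nz(1) by (simp add: rhs1_term_vanishes)
    ultimately show ?thesis by (intro exI[of _ 0]) simp
  next
    case False
    then have jm': "j < m" using jm by simp
    have d3: "1 - V*y \<noteq> 0" using h4[OF jm'] by (simp add: V_def y_def)
    have "rhs1_term q a w e x (Suc j) = t * (K * ((1 - V*y^2)/(1 - V*y)))"
      unfolding t_def K_def V_def y_def
      by (rule rhs1_term_Suc) (use xnz h1 h2 h3 h4[OF jm'] in auto)
    moreover have "A - c * ((1 - V*y^2)/(1 - V*y)) = ((1 - V*y^2)/(1 - V*y)) * P (q*q*y) - C"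
      unfolding A_def C_def c P
      by (rule cert1_telescoping_identity[OF nz(1) Vnz ynz _ nz(3) d1 d2 d3 d4 refl refl refl refl])
        (use nz in simp)
    ultimately show ?thesis by blast
  qed
  then obtain B where B: "rhs1_term q a w e x (Suc j) = t * (K * B)" "A - c * B = B * P (q*q*y) - C"
    by blast
  have "rhs1_term q a w e (x*q) (Suc j) - c * rhs1_term q a w e x (Suc j)
      = rhs1_term q a w e x (Suc j) * P (q*q*y) - t * P (q*y)"
    unfolding shift B(1) cert by (rule telescoping_step_from_ratios[OF B(2)])
  then show ?thesis
    by (simp add: c_def P_def y_def t_def mult.assoc)
qed

lemma rhs1_sum_recurrence:
  fixes q a w e x :: complex and m :: nat
  assumes x: "x = q^m" and nz: "q \<noteq> 0" "a \<noteq> 0" "w \<noteq> 0"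
    and ee: "e^2 = q^3 * inverse a"
    and h1: "\<And>j. j \<le> m \<Longrightarrow> 1 - q*q^j \<noteq> 0"
    and h2: "\<And>j. j \<le> m \<Longrightarrow> 1 - e*q^j \<noteq> 0" and h3: "\<And>j. j \<le> m \<Longrightarrow> 1 - (-e)*q^j \<noteq> 0"
    and h4: "\<And>j. j < m \<Longrightarrow> 1 - inverse (x^2) * q^j \<noteq> 0"
    and h5: "inverse (x^2) - q \<noteq> 0" "inverse (x^2) - q^3 * inverse a \<noteq> 0"
    and h6: "1 - inverse ((x*q)^2) \<noteq> 0"
    and h7: "\<And>j. j \<le> m \<Longrightarrow> 1 - inverse ((x*q)^2) * q * q^j \<noteq> 0"
  shows "(\<Sum>k\<le>Suc m. rhs1_term q a w e (x*q) k) = ratio1 q a w x * (\<Sum>k\<le>m. rhs1_term q a w e x k)"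
proof (rule sum_telescoping_certificate[where R = "\<lambda>k. cert1 q a w x (q^k)"])
  show "rhs1_term q a w e x (Suc m) = 0" using x nz(1) by (rule rhs1_term_vanishes)
  have xnz: "x \<noteq> 0" using x nz by simp
  have "1 - ratio1 q a w x = cert1 q a w x q"
    unfolding ratio1_def cert1_def
    using cert1_initial_identity[OF nz(1) _ _ nz(3) h5 refl refl] nz xnz by simp
  then show "rhs1_term q a w e (x*q) 0 - ratio1 q a w x * rhs1_term q a w e x 0
      = rhs1_term q a w e x 0 * cert1 q a w x (q^1)"
    by (simp add: rhs1_term_def)
next
  fix j assume jm: "j \<le> m"
  have h6': "1 - inverse ((x*q)^2) * q \<noteq> 0" using h7[of 0] by simp
  show "rhs1_term q a w e (x*q) (Suc j) - ratio1 q a w x * rhs1_term q a w e x (Suc j)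
      = rhs1_term q a w e x (Suc j) * cert1 q a w x (q ^ Suc (Suc j))
        - rhs1_term q a w e x j * cert1 q a w x (q ^ Suc j)"
    by (rule rhs1_telescoping_step[OF x jm nz ee h1[OF jm] h2[OF jm] h3[OF jm] h4 h5 h6 h6' h7[OF jm]])
qed

lemma lhs1_Suc:
  assumes nz: "q \<noteq> 0" "a \<noteq> 0" "w \<noteq> 0"
    and u: "1 - q * (q^2)^m \<noteq> 0" "1 - inverse a * q^3 * (q^2)^m \<noteq> 0"
  shows "lhs1 q a w (Suc m) = ratio1 q a w (q^m) * lhs1 q a w m"
proof -
  define X where "X = (q^m)^2"
  have X: "(q^2)^m = X" by (simp add: X_def power_mult[symmetric] mult.commute)
  have Xnz: "X \<noteq> 0" using nz by (simp add: X_def)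
  have u1: "1 - q * X \<noteq> 0" and u2: "1 - inverse a * q^3 * X \<noteq> 0" using u by (simp_all add: X)
  have v1: "inverse X - q = (1 - q * X) / X" and v2: "inverse X - q^3 * inverse a = (1 - inverse a * q^3 * X) / X"
    using Xnz by (simp_all add: field_simps)
  have "(1 - w*q^2*X) * (1 - inverse a*q^2*inverse w*X) / (U1 * U2)
      = (inverse X - w*q^2) * (w*inverse X - q^2*inverse a) / (w * ((U1 / X) * (U2 / X)))"
    if "U1 \<noteq> 0" "U2 \<noteq> 0" for U1 U2
    using that nz Xnz by (simp add: field_simps)
  from this[OF u1 u2] show ?thesis
    unfolding lhs1_def qpoch_Suc mult_quotient_regroup2 X ratio1_def X_def[symmetric] v1 v2 by simp
qed

lemma first_identity:
  fixes q a w e :: complex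
  assumes nz: "q \<noteq> 0" "a \<noteq> 0" "w \<noteq> 0" and ee: "e^2 = q^3 * inverse a"
    and d1: "qpoch q (q^2) n \<noteq> 0" and d2: "qpoch (inverse a * q^3) (q^2) n \<noteq> 0"
    and d3: "qpoch q q n \<noteq> 0" and d4: "qpoch (inverse (q^(2*n))) q n \<noteq> 0"
    and d5: "qpoch e q n \<noteq> 0" and d6: "qpoch (- e) q n \<noteq> 0"
  shows "lhs1 q a w n = (\<Sum>k\<le>n. rhs1_term q a w e (q^n) k)"
proof -
  have inv_factor: "1 - inverse (q^M) * q^j \<noteq> 0" if "j < M" "M \<le> 2*n" for j M
    using that nz power_ne_1_if_qpoch_nonzero[OF nz(1) d3 d4, of "M - j"]
    by (simp add: inverse_power_mult_power)
  have "lhs1 q a w m = (\<Sum>k\<le>m. rhs1_term q a w e (q^m) k)" if "m \<le> n" for m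
    using that
  proof (induction m)
    case 0
    show ?case by (simp add: lhs1_def rhs1_term_def)
  next
    case (Suc m)
    then have mn: "m < n" by simp
    have u1: "1 - q * (q^2)^m \<noteq> 0" using qpoch_nonzero_factor[OF d1 mn] .
    have u2: "1 - inverse a * q^3 * (q^2)^m \<noteq> 0" using qpoch_nonzero_factor[OF d2 mn] by simp
    have X: "(q^2)^m = (q^m)^2" by (simp add: power_mult[symmetric] mult.commute)
    have sq: "(q^m*q)^2 = q^(2*Suc m)" by (simp only: power_Suc2[symmetric] power2_power)
    have "(\<Sum>k\<le>Suc m. rhs1_term q a w e (q^m*q) k) = ratio1 q a w (q^m) * (\<Sum>k\<le>m. rhs1_term q a w e (q^m) k)"
    proof (rule rhs1_sum_recurrence[OF refl nz ee])
      fix j assume jm: "j \<le> m"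
      then have jn: "j < n" using mn by simp
      show "1 - q*q^j \<noteq> 0" using qpoch_nonzero_factor[OF d3 jn] .
      show "1 - e*q^j \<noteq> 0" using qpoch_nonzero_factor[OF d5 jn] by simp
      show "1 - (-e)*q^j \<noteq> 0" using qpoch_nonzero_factor[OF d6 jn] by simp
      have "1 - inverse (q^(2 * Suc m)) * q^Suc j \<noteq> 0"
        using inv_factor[of "Suc j" "2 * Suc m"] jm mn by simp
      then show "1 - inverse ((q^m*q)^2) * q * q^j \<noteq> 0"
        unfolding sq by (metis mult.assoc power_Suc)
    next
      fix j assume "j < m"
      then show "1 - inverse ((q^m)^2) * q^j \<noteq> 0"
        using inv_factor[of j "2*m"] mn by (simp add: power2_power)
    next
      have Xnz: "(q^m)^2 \<noteq> 0" using nz by simp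
      have "(inverse ((q^m)^2) - q) * (q^m)^2 = 1 - q * (q^m)^2"
        and "(inverse ((q^m)^2) - q^3 * inverse a) * (q^m)^2 = 1 - inverse a * q^3 * (q^m)^2"
        using Xnz by (simp_all add: field_simps)
      then show "inverse ((q^m)^2) - q \<noteq> 0" "inverse ((q^m)^2) - q^3 * inverse a \<noteq> 0"
        using u1 u2 unfolding X by auto
      show "1 - inverse ((q^m*q)^2) \<noteq> 0"
        using inv_factor[of 0 "2 * Suc m"] mn unfolding sq by simp
    qed
    then show ?case
      using Suc lhs1_Suc[OF nz u1 u2] by (simp only: power_Suc2)
  qed
  then show ?thesis by simp
qed

definition lhs2 :: "complex \<Rightarrow> complex \<Rightarrow> complex \<Rightarrow> nat \<Rightarrow> complex" where
  "lhs2 q a w n = qpoch (w * q^2) (q^2) n * qpoch (a * w * inverse (q^(2*n))) (q^2) n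
     / (qpoch (w * q) q n * qpoch (a * w * inverse (q^n)) q n)"

text \<open>As before \<open>x\<close> stands for \<open>q\<^sup>n\<close>; \<open>r\<close> and \<open>s\<close> are the square roots of \<open>q\<close> and \<open>a\<close>.\<close>

definition rhs2_term :: "complex \<Rightarrow> complex \<Rightarrow> complex \<Rightarrow> complex \<Rightarrow> complex \<Rightarrow> complex \<Rightarrow> nat \<Rightarrow> complex" where
  "rhs2_term q a w r s x k = qpoch (inverse x) q k * qpoch (x * q) q k * qpoch (s * inverse (x * r)) q k
     * qpoch (- s * inverse (x * r)) q k
     / (qpoch q q k * qpoch (- q) q k * qpoch (inverse w * inverse x) q k * qpoch (a * w * inverse x) q k)
     * q^k"

definition ratio2 :: "complex \<Rightarrow> complex \<Rightarrow> complex \<Rightarrow> complex \<Rightarrow> complex" where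
  "ratio2 q a w x = (1 - w * q^2 * x^2) * (x^2 * q^2 - a * w) / (x * q * ((1 - w * q * x) * (x * q - a * w)))"

lemma rhs2_term_Suc:
  assumes nz: "q \<noteq> 0" "x \<noteq> 0" "w \<noteq> 0" "r \<noteq> 0" and sr: "s^2 = a" "r^2 = q"
    and h: "1 - q * q^j \<noteq> 0" "1 - -q * q^j \<noteq> 0" "1 - inverse w * inverse x * q^j \<noteq> 0"
      "1 - a * w * inverse x * q^j \<noteq> 0"
  shows "rhs2_term q a w r s x (Suc j) = rhs2_term q a w r s x j *
    (q * (1 - x * q * q^j) / ((1 - q * q^j) * (1 - -q * q^j))
      * (w * (x - q^j) * (x^2 * q - a * (q^j)^2) / (x * q * ((w * x - q^j) * (x - a * w * q^j)))))"
proof -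
  let ?y = "q^j"
  have regroup: "a1 * a2 * a3 * a4 * q / (b1 * b2 * b3 * b4)
      = q * (1 - x*q*y) / (b1 * b2) * (w * (x-y) * (x^2*q - a*y^2) / (x * q * (e1 * e2)))"
    if "b1 \<noteq> 0" "b2 \<noteq> 0" "b3 \<noteq> 0" "b4 \<noteq> 0" "e1 \<noteq> 0" "e2 \<noteq> 0"
      and "a1 * x = x - y" "a2 = 1 - x*q*y" "a3 * a4 * (x^2*q) = x^2*q - a*y^2"
      "b3 * (w*x) = e1" "b4 * x = e2" "e1 = w*x - y" "e2 = x - a*w*y"
    for y a1 a2 a3 a4 b1 b2 b3 b4 e1 e2 :: complex
    using that(1-6) nz(1-3)
    apply (simp add: field_simps)
    apply (thin_tac "_ \<noteq> _")+
    using that(7-13)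
    apply algebra
    done
  have e1: "(1 - inverse w * inverse x * ?y) * (w*x) = w*x - ?y" using nz by (simp add: field_simps)
  have e2: "(1 - a * w * inverse x * ?y) * x = x - a*w*?y" using nz by (simp add: field_simps)
  have "w*x - ?y \<noteq> 0" using e1 h(3) nz by (metis mult_eq_0_iff)
  moreover have "x - a*w*?y \<noteq> 0" using e2 h(4) nz by (metis mult_eq_0_iff)
  moreover have "(1 - inverse x * ?y) * x = x - ?y" using nz by (simp add: field_simps)
  moreover have "(1 - s * inverse (x*r) * ?y) * (1 - - s * inverse (x*r) * ?y) * (x^2*q) = x^2*q - a*?y^2"
  proof -
    have "(1 - s * inverse (x*r) * ?y) * (1 - - s * inverse (x*r) * ?y) = 1 - s^2 * ?y^2 / (x^2 * r^2)"
      using nz by (simp add: field_simps power2_eq_square)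
    then show ?thesis using nz sr by (simp add: field_simps)
  qed
  ultimately show ?thesis
    unfolding rhs2_term_def qpoch_Suc power_Suc mult_quotient_regroup4
    by (subst regroup[OF h]) (use e1 e2 in auto)
qed

lemma rhs2_term_shift_Suc:
  assumes nz: "q \<noteq> 0" "x \<noteq> 0" "w \<noteq> 0" "r \<noteq> 0" and sr: "s^2 = a" "r^2 = q"
    and h: "1 - q * q^j \<noteq> 0" "1 - -q * q^j \<noteq> 0" "1 - inverse w * inverse (x*q) \<noteq> 0"
      "1 - a * w * inverse (x*q) \<noteq> 0" "1 - x * q \<noteq> 0"
  shows "rhs2_term q a w r s (x*q) (Suc j) = rhs2_term q a w r s x j *
    (q * (1 - x * q * q^j) / ((1 - q * q^j) * (1 - -q * q^j))
      * (-((1 - x * q^2 * q^j) * (x^2 * q^3 - a) * w) / (x * q^2 * ((w * x * q - 1) * (x * q - a * w)))))"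
proof -
  let ?y = "q^j"
  have regroup: "a1 * a2 * a3 * a4 * q / (b1 * b2 * b3 * b4)
      = q * (1 - x*q*y) / (b1 * b2) * (-((1 - x*q^2*y) * (x^2*q^3 - a) * w) / (x * q^2 * (f1 * f2)))"
    if "b1 \<noteq> 0" "b2 \<noteq> 0" "b3 \<noteq> 0" "b4 \<noteq> 0" "f1 \<noteq> 0" "f2 \<noteq> 0" "g \<noteq> 0"
      and "a1 * (x*q) = x*q - 1" "a2 * g = (1 - x*q*y) * (1 - x*q*q*y)" "g = 1 - x*q"
        "a3 * a4 * (x^2*q^3) = x^2*q^3 - a" "b3 * (w*x*q) = f1" "b4 * (x*q) = f2"
        "f1 = w*x*q - 1" "f2 = x*q - a*w"
    for y a1 a2 a3 a4 b1 b2 b3 b4 f1 f2 g :: complex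
    using that(1-7) nz(1-3)
    apply (simp add: field_simps)
    apply (thin_tac "_ \<noteq> _")+
    using that(8-15)
    apply algebra
    done
  have shift_inv: "qpoch (inverse (x*q)) q (Suc j) = qpoch (inverse x) q j * (1 - inverse (x*q))"
    unfolding qpoch_Suc_shift using nz by (simp add: field_simps)
  have shift_xq: "qpoch (x*q*q) q (Suc j) = qpoch (x*q) q j * ((1 - x*q*?y) * (1 - x*q*q*?y) / (1 - x*q))"
  proof -
    have "(1 - x*q) * qpoch (x*q*q) q (Suc j) = qpoch (x*q) q (Suc (Suc j))"
      by (rule qpoch_Suc_shift[symmetric])
    also have "\<dots> = qpoch (x*q) q j * ((1 - x*q*?y) * (1 - x*q*q*?y))"
      by (simp add: qpoch_Suc mult.assoc mult.left_commute)
    finally show ?thesis using h(5) by (simp add: field_simps)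
  qed
  have shift_s: "qpoch (s * inverse (x*q*r)) q (Suc j) = qpoch (s * inverse (x*r)) q j * (1 - s * inverse (x*q*r))"
    unfolding qpoch_Suc_shift using nz by (simp add: field_simps)
  have shift_neg_s: "qpoch (- s * inverse (x*q*r)) q (Suc j) = qpoch (- s * inverse (x*r)) q j * (1 - - s * inverse (x*q*r))"
    unfolding qpoch_Suc_shift using nz by (simp add: field_simps)
  have shift_w: "qpoch (inverse w * inverse (x*q)) q (Suc j) = qpoch (inverse w * inverse x) q j * (1 - inverse w * inverse (x*q))"
    unfolding qpoch_Suc_shift using nz by (simp add: field_simps)
  have shift_aw: "qpoch (a * w * inverse (x*q)) q (Suc j) = qpoch (a * w * inverse x) q j * (1 - a * w * inverse (x*q))"
    unfolding qpoch_Suc_shift using nz by (simp add: field_simps)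
  have f1: "(1 - inverse w * inverse (x*q)) * (w*x*q) = w*x*q - 1" using nz by (simp add: field_simps)
  have f2: "(1 - a * w * inverse (x*q)) * (x*q) = x*q - a*w" using nz by (simp add: field_simps)
  have "w*x*q - 1 \<noteq> 0" using f1 h(3) nz by (metis mult_eq_0_iff)
  moreover have "x*q - a*w \<noteq> 0" using f2 h(4) nz by (metis mult_eq_0_iff)
  moreover have "(1 - inverse (x*q)) * (x*q) = x*q - 1" using nz by (simp add: field_simps)
  moreover have "((1 - x*q*?y) * (1 - x*q*q*?y) / (1 - x*q)) * (1 - x*q) = (1 - x*q*?y) * (1 - x*q*q*?y)"
    using h(5) by simp
  moreover have "(1 - s * inverse (x*q*r)) * (1 - - s * inverse (x*q*r)) * (x^2*q^3) = x^2*q^3 - a"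
  proof -
    have "(1 - s * inverse (x*q*r)) * (1 - - s * inverse (x*q*r)) = 1 - s^2 / (x^2 * q^2 * r^2)"
      using nz by (simp add: field_simps power2_eq_square)
    then show ?thesis using nz sr by (simp add: field_simps power2_eq_square power3_eq_cube)
  qed
  ultimately show ?thesis
    unfolding rhs2_term_def shift_inv shift_xq shift_s shift_neg_s shift_w shift_aw
    unfolding qpoch_Suc power_Suc mult_quotient_regroup4
    by (subst regroup[OF h(1-4) _ _ h(5)]) (use f1 f2 in auto)
qed

lemma rhs2_term_vanishes: "x = q^m \<Longrightarrow> q \<noteq> 0 \<Longrightarrow> rhs2_term q a w r s x (Suc m) = 0"
  unfolding rhs2_term_def by (simp add: qpoch_Suc)

definition cert2 :: "complex \<Rightarrow> complex \<Rightarrow> complex \<Rightarrow> complex \<Rightarrow> complex \<Rightarrow> complex" where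
  "cert2 q a w x z = -(w * (1 - x*z) * (x^3 * q^4 - a*z)) / (x * q * ((1 - w*q*x) * (x*q - a*w)) * z)"

lemma cert2_initial_identity:
  fixes q x a w f2 h1 :: complex
  assumes "q \<noteq> 0" "x \<noteq> 0" "a \<noteq> 0" "w \<noteq> 0" "f2 \<noteq> 0" "h1 \<noteq> 0"
    and "f2 = x*q-a*w" "h1 = 1-w*q*x"
  shows "1 - (1-w*q^2*x^2)*(x^2*q^2-a*w)/(x*q*(h1*f2)) = -(w*(1-x*q)*(x^3*q^4-a*q))/(x*q*(h1*f2)*q)"
  using assms(1-6)
  apply (simp add: field_simps)
  apply (unfold assms(7,8))
  apply (thin_tac "_ \<noteq> _")+
  apply algebra
  done

lemma cert2_telescoping_identity:
  fixes q x y a w e1 e2 f1 f2 h1 :: complex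
  assumes "q \<noteq> 0" "x \<noteq> 0" "y \<noteq> 0" "a \<noteq> 0" "w \<noteq> 0"
    and "e1 \<noteq> 0" "e2 \<noteq> 0" "f1 \<noteq> 0" "f2 \<noteq> 0" "h1 \<noteq> 0"
    and "e1 = w*x-y" "e2 = x-a*w*y" "f1 = w*x*q-1" "f2 = x*q-a*w" "h1 = 1-w*q*x"
  shows "-((1-x*q^2*y)*(x^2*q^3-a)*w)/(x*q^2*(f1*f2))
     - ((1-w*q^2*x^2)*(x^2*q^2-a*w)/(x*q*(h1*f2))) * (w*(x-y)*(x^2*q-a*y^2)/(x*q*(e1*e2)))
   = (w*(x-y)*(x^2*q-a*y^2)/(x*q*(e1*e2))) * (-(w*(1-x*(q*q*y))*(x^3*q^4-a*(q*q*y)))/(x*q*(h1*f2)*(q*q*y)))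
     - (-(w*(x^3*q^3-a*y)*(1-q^2*y^2))/(x*q^2*(h1*f2)*y))"
  using assms(1-10)
  apply (simp add: field_simps)
  apply (unfold assms(11-15))
  apply (thin_tac "_ \<noteq> _")+
  apply algebra
  done

lemma cert2_final_identity:
  fixes q x a w f1 f2 h1 :: complex
  assumes "q \<noteq> 0" "x \<noteq> 0" "a \<noteq> 0" "w \<noteq> 0" "f1 \<noteq> 0" "f2 \<noteq> 0" "h1 \<noteq> 0"
    and "f1 = w*x*q-1" "f2 = x*q-a*w" "h1 = 1-w*q*x"
  shows "-((1-x*q^2*x)*(x^2*q^3-a)*w)/(x*q^2*(f1*f2)) = - (-(w*(x^3*q^3-a*x)*(1-q^2*x^2))/(x*q^2*(h1*f2)*x))"
  using assms(1-7)
  apply (simp add: field_simps)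
  apply (unfold assms(8-10))
  apply (thin_tac "_ \<noteq> _")+
  apply algebra
  done

lemma cert2_shift_ratio:
  fixes q x y a w b1 b2 h1 f2 :: complex
  assumes "q \<noteq> 0" "x \<noteq> 0" "y \<noteq> 0" "w \<noteq> 0" "b1 \<noteq> 0" "b2 \<noteq> 0" "h1 \<noteq> 0" "f2 \<noteq> 0"
    and "b1 = 1-q*y" "b2 = 1 - -q*y"
  shows "-(w*(1-x*(q*y))*(x^3*q^4-a*(q*y)))/(x*q*(h1*f2)*(q*y))
    = q*(1-x*q*y)/(b1*b2) * (-(w*(x^3*q^3-a*y)*(1-q^2*y^2))/(x*q^2*(h1*f2)*y))"
  using assms(1-8)
  apply (simp add: field_simps)
  apply (unfold assms(9,10))
  apply (thin_tac "_ \<noteq> _")+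
  apply algebra
  done

lemma rhs2_telescoping_step:
  fixes q a w r s x :: complex and m j :: nat
  assumes x: "x = q^m" and jm: "j \<le> m" and nz: "q \<noteq> 0" "a \<noteq> 0" "w \<noteq> 0" "r \<noteq> 0"
    and sr: "s^2 = a" "r^2 = q"
    and g1: "1 - q*q^j \<noteq> 0" and g2: "1 - -q*q^j \<noteq> 0"
    and g3: "j < m \<Longrightarrow> 1 - inverse w * inverse x * q^j \<noteq> 0"
    and g4: "j < m \<Longrightarrow> 1 - a * w * inverse x * q^j \<noteq> 0"
    and g5: "1 - x*q \<noteq> 0" and g6: "1 - inverse w * inverse (x*q) \<noteq> 0"
    and g7: "1 - a * w * inverse (x*q) \<noteq> 0" and g8: "1 - w*q*x \<noteq> 0"
  shows "rhs2_term q a w r s (x*q) (Suc j) - ratio2 q a w x * rhs2_term q a w r s x (Suc j)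
    = rhs2_term q a w r s x (Suc j) * cert2 q a w x (q ^ Suc (Suc j))
      - rhs2_term q a w r s x j * cert2 q a w x (q ^ Suc j)"
proof -
  define c where "c = ratio2 q a w x"
  define P where "P = cert2 q a w x"
  define y where "y = q^j"
  define t where "t = rhs2_term q a w r s x j"
  define K where "K = q*(1-x*q*y)/((1-q*y)*(1 - -q*y))"
  define A where "A = -((1-x*q^2*y)*(x^2*q^3-a)*w)/(x*q^2*((w*x*q-1)*(x*q-a*w)))"
  define C where "C = -(w*(x^3*q^3-a*y)*(1-q^2*y^2))/(x*q^2*((1-w*q*x)*(x*q-a*w))*y)"
  have xnz: "x \<noteq> 0" using x nz by simp
  have ynz: "y \<noteq> 0" using nz by (simp add: y_def)
  have "(1 - inverse w * inverse (x*q)) * (w*x*q) = w*x*q - 1" using nz xnz by (simp add: field_simps)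
  then have f1: "w*x*q - 1 \<noteq> 0" using g6 nz xnz by (metis mult_eq_0_iff)
  have "(1 - a * w * inverse (x*q)) * (x*q) = x*q - a*w" using nz xnz by (simp add: field_simps)
  then have f2: "x*q - a*w \<noteq> 0" using g7 nz xnz by (metis mult_eq_0_iff)
  have shift: "rhs2_term q a w r s (x*q) (Suc j) = t * (K * A)"
    unfolding t_def K_def A_def y_def
    by (rule rhs2_term_shift_Suc[OF nz(1) xnz nz(3,4) sr g1 g2 g6 g7 g5])
  have cert: "P (q*y) = K * C"
    unfolding P_def cert2_def K_def C_def
    by (rule cert2_shift_ratio[OF nz(1) xnz ynz nz(3) _ _ g8 f2 refl refl])
      (use g1 g2 in \<open>auto simp: y_def\<close>)
  have "\<exists>B. rhs2_term q a w r s x (Suc j) = t * (K * B) \<and> A - c * B = B * P (q*q*y) - C"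
  proof (cases "j = m")
    case True
    then have yx: "y = x" using x y_def by simp
    have "A = - C"
      unfolding A_def C_def yx by (rule cert2_final_identity[OF nz(1) xnz nz(2,3) f1 f2 g8 refl refl refl])
    moreover have "rhs2_term q a w r s x (Suc j) = 0"
      using True x nz(1) by (simp add: rhs2_term_vanishes)
    ultimately show ?thesis by (intro exI[of _ 0]) simp
  next
    case False
    then have jm': "j < m" using jm by simp
    have "(1 - inverse w * inverse x * y) * (w*x) = w*x - y" using nz xnz by (simp add: field_simps)
    then have e1: "w*x - y \<noteq> 0" using g3[OF jm'] nz xnz by (metis mult_eq_0_iff y_def)
    have "(1 - a * w * inverse x * y) * x = x - a*w*y" using nz xnz by (simp add: field_simps)
    then have e2: "x - a*w*y \<noteq> 0" using g4[OF jm'] nz xnz by (metis mult_eq_0_iff y_def)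
    define B where "B = w*(x-y)*(x^2*q-a*y^2)/(x*q*((w*x-y)*(x-a*w*y)))"
    have "rhs2_term q a w r s x (Suc j) = t * (K * B)"
      unfolding t_def K_def B_def y_def
      by (rule rhs2_term_Suc[OF nz(1) xnz nz(3,4) sr g1 g2 g3[OF jm'] g4[OF jm']])
    moreover have "A - c * B = B * P (q*q*y) - C"
      unfolding A_def B_def C_def c_def ratio2_def P_def cert2_def
      by (rule cert2_telescoping_identity[OF nz(1) xnz ynz nz(2,3) e1 e2 f1 f2 g8 refl refl refl refl refl])
    ultimately show ?thesis by blast
  qed
  then obtain B where B: "rhs2_term q a w r s x (Suc j) = t * (K * B)" "A - c * B = B * P (q*q*y) - C"
    by blast
  have "rhs2_term q a w r s (x*q) (Suc j) - c * rhs2_term q a w r s x (Suc j)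
      = rhs2_term q a w r s x (Suc j) * P (q*q*y) - t * P (q*y)"
    unfolding shift B(1) cert by (rule telescoping_step_from_ratios[OF B(2)])
  then show ?thesis
    by (simp add: c_def P_def y_def t_def mult.assoc)
qed

lemma rhs2_sum_recurrence:
  fixes q a w r s x :: complex and m :: nat
  assumes x: "x = q^m" and nz: "q \<noteq> 0" "a \<noteq> 0" "w \<noteq> 0" "r \<noteq> 0"
    and sr: "s^2 = a" "r^2 = q"
    and g1: "\<And>j. j \<le> m \<Longrightarrow> 1 - q*q^j \<noteq> 0"
    and g2: "\<And>j. j \<le> m \<Longrightarrow> 1 - -q*q^j \<noteq> 0"
    and g3: "\<And>j. j < m \<Longrightarrow> 1 - inverse w * inverse x * q^j \<noteq> 0"
    and g4: "\<And>j. j < m \<Longrightarrow> 1 - a * w * inverse x * q^j \<noteq> 0"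
    and g5: "1 - x*q \<noteq> 0" and g6: "1 - inverse w * inverse (x*q) \<noteq> 0"
    and g7: "1 - a * w * inverse (x*q) \<noteq> 0" and g8: "1 - w*q*x \<noteq> 0"
  shows "(\<Sum>k\<le>Suc m. rhs2_term q a w r s (x*q) k) = ratio2 q a w x * (\<Sum>k\<le>m. rhs2_term q a w r s x k)"
proof (rule sum_telescoping_certificate[where R = "\<lambda>k. cert2 q a w x (q^k)"])
  show "rhs2_term q a w r s x (Suc m) = 0" using x nz(1) by (rule rhs2_term_vanishes)
  have xnz: "x \<noteq> 0" using x nz by simp
  have "(1 - a * w * inverse (x*q)) * (x*q) = x*q - a*w" using nz xnz by (simp add: field_simps)
  then have f2: "x*q - a*w \<noteq> 0" using g7 nz xnz by (metis mult_eq_0_iff)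
  have "1 - ratio2 q a w x = cert2 q a w x q"
    unfolding ratio2_def cert2_def using cert2_initial_identity[OF nz(1) xnz nz(2,3) f2 g8 refl refl] by simp
  then show "rhs2_term q a w r s (x*q) 0 - ratio2 q a w x * rhs2_term q a w r s x 0
      = rhs2_term q a w r s x 0 * cert2 q a w x (q^1)"
    by (simp add: rhs2_term_def)
next
  fix j assume jm: "j \<le> m"
  show "rhs2_term q a w r s (x*q) (Suc j) - ratio2 q a w x * rhs2_term q a w r s x (Suc j)
      = rhs2_term q a w r s x (Suc j) * cert2 q a w x (q ^ Suc (Suc j))
        - rhs2_term q a w r s x j * cert2 q a w x (q ^ Suc j)"
    by (rule rhs2_telescoping_step[OF x jm nz sr g1[OF jm] g2[OF jm] g3 g4 g5 g6 g7 g8])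
qed

lemma lhs2_Suc:
  assumes nz: "q \<noteq> 0" "a \<noteq> 0" "w \<noteq> 0"
    and u: "1 - w * q * q^m \<noteq> 0" "1 - a * w * inverse (q^m * q) \<noteq> 0"
  shows "lhs2 q a w (Suc m) = ratio2 q a w (q^m) * lhs2 q a w m"
proof -
  have X: "(q^2)^m = (q^m)^2" by (simp add: power_mult[symmetric] mult.commute)
  have sq: "(q^m*q)^2 = q^(2 * Suc m)"
    by (simp only: power_Suc2[symmetric] power2_power)
  have "q^(2 * Suc m) = q^(2*m) * q^2" by (simp add: power_add[symmetric])
  then have shift_factor: "a * w * inverse (q^(2 * Suc m)) * q^2 = a * w * inverse (q^(2*m))"
    using nz by (simp add: field_simps)
  have shift_aw2: "qpoch (a * w * inverse (q^(2 * Suc m))) (q^2) (Suc m)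
      = qpoch (a * w * inverse (q^(2*m))) (q^2) m * (1 - a * w * inverse ((q^m*q)^2))"
    unfolding qpoch_Suc_shift shift_factor sq by (simp add: mult.commute)
  have shift_aw: "qpoch (a * w * inverse (q^(Suc m))) q (Suc m)
      = qpoch (a * w * inverse (q^m)) q m * (1 - a * w * inverse (q^m * q))"
    unfolding qpoch_Suc_shift using nz by (simp add: field_simps)
  have factor: "(1 - w*q^2*x^2) * (1 - a*w*inverse ((x*q)^2)) / (u1 * u2)
      = (1 - w*q^2*x^2) * (x^2*q^2 - a*w) / (x*q*(u1*(x*q - a*w)))"
    if "x \<noteq> 0" "u1 \<noteq> 0" "u2 \<noteq> 0" "u2 * (x*q) = x*q - a*w" for x u1 u2
  proof -
    have u2: "u2 = (x*q - a*w) / (x*q)" using that nz by (simp add: field_simps)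
    then have "x*q - a*w \<noteq> 0" using that nz by auto
    then show ?thesis unfolding u2 using that(1-2) nz by (simp add: field_simps power2_eq_square)
  qed
  have "(1 - a * w * inverse (q^m * q)) * (q^m*q) = q^m*q - a*w"
    using nz by (simp add: field_simps)
  from factor[OF _ u this] show ?thesis
    unfolding lhs2_def shift_aw2 shift_aw unfolding qpoch_Suc mult_quotient_regroup2 X ratio2_def
    using nz by (simp add: mult.commute)
qed

lemma second_identity:
  fixes q a w r s :: complex
  assumes sr: "r^2 = q" "s^2 = a" and nz: "q \<noteq> 0" "a \<noteq> 0" "w \<noteq> 0"
    and d3: "qpoch q q n \<noteq> 0" and d7: "qpoch (w * q) q n \<noteq> 0"
    and d8: "qpoch (a * w * inverse (q^n)) q n \<noteq> 0" and d9: "qpoch (- q) q n \<noteq> 0"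
    and d10: "qpoch (inverse w * inverse (q^n)) q n \<noteq> 0"
  shows "lhs2 q a w n = (\<Sum>k\<le>n. rhs2_term q a w r s (q^n) k)"
proof -
  have r_nz: "r \<noteq> 0" using sr(1) nz(1) by auto
  have scaled_inverse_power: "u * inverse (q^n) * q^(n - i) = u * inverse (q^i)" if "i \<le> n" for u i
    using nz(1) that by (simp add: mult.assoc inverse_power_mult_power)
  have "lhs2 q a w m = (\<Sum>k\<le>m. rhs2_term q a w r s (q^m) k)" if "m \<le> n" for m
    using that
  proof (induction m)
    case 0
    show ?case by (simp add: lhs2_def rhs2_term_def)
  next
    case (Suc m)
    then have mn: "m < n" by simp
    have u1: "1 - w * q * q^m \<noteq> 0" using qpoch_nonzero_factor[OF d7 mn] .
    have top: "inverse (q^n) * q^(n - Suc m) = inverse (q^m * q)"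
      using nz(1) mn by (simp add: inverse_power_mult_power power_Suc2)
    have u2: "1 - a * w * inverse (q^m * q) \<noteq> 0"
      using qpoch_nonzero_factor[OF d8, of "n - Suc m"] mn top by (simp add: mult.assoc)
    have "(\<Sum>k\<le>Suc m. rhs2_term q a w r s (q^m*q) k)
        = ratio2 q a w (q^m) * (\<Sum>k\<le>m. rhs2_term q a w r s (q^m) k)"
    proof (rule rhs2_sum_recurrence[OF refl nz r_nz sr(2,1)])
      fix j assume "j \<le> m"
      then have jn: "j < n" using mn by simp
      show "1 - q*q^j \<noteq> 0" using qpoch_nonzero_factor[OF d3 jn] .
      show "1 - -q*q^j \<noteq> 0" using qpoch_nonzero_factor[OF d9 jn] .
    next
      fix j assume j: "j < m"
      have "inverse (q^m) * q^j = inverse (q^(m - j))"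
        using nz(1) j by (simp add: inverse_power_mult_power)
      then have eq: "u * inverse (q^n) * q^(n - (m - j)) = u * inverse (q^m) * q^j" for u
        using scaled_inverse_power[of "m - j" u] j mn by (simp add: mult.assoc)
      have i: "n - (m - j) < n" using j mn by simp
      show "1 - inverse w * inverse (q^m) * q^j \<noteq> 0"
        using qpoch_nonzero_factor[OF d10 i] eq[of "inverse w"] by simp
      show "1 - a * w * inverse (q^m) * q^j \<noteq> 0"
        using qpoch_nonzero_factor[OF d8 i] eq[of "a * w"] by simp
    next
      have i: "n - Suc m < n" using mn by simp
      show "1 - q^m * q \<noteq> 0" using qpoch_nonzero_factor[OF d3 mn] by (simp add: mult.commute)
      show "1 - inverse w * inverse (q^m * q) \<noteq> 0"
        using qpoch_nonzero_factor[OF d10 i] top by (simp add: mult.assoc)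
      show "1 - a * w * inverse (q^m * q) \<noteq> 0" by (rule u2)
      show "1 - w * q * q^m \<noteq> 0" by (rule u1)
    qed
    then show ?case
      using Suc lhs2_Suc[OF nz u1 u2] by (simp only: power_Suc2)
  qed
  then show ?thesis by simp
qed

theorem mainTheorem2:
  fixes n :: nat and q a w r s :: complex
  assumes r_sq: "r ^ 2 = q"
    and s_sq: "s ^ 2 = a"
    and q_nz: "q \<noteq> 0" and a_nz: "a \<noteq> 0" and w_nz: "w \<noteq> 0"
    and d1: "qpoch q (q^2) n \<noteq> 0"
    and d2: "qpoch (inverse a * q^3) (q^2) n \<noteq> 0"
    and d3: "qpoch q q n \<noteq> 0"
    and d4: "qpoch (inverse (q ^ (2*n))) q n \<noteq> 0"
    and d5: "qpoch (inverse s * r^3) q n \<noteq> 0"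
    and d6: "qpoch (- inverse s * r^3) q n \<noteq> 0"
    and d7: "qpoch (w * q) q n \<noteq> 0"
    and d8: "qpoch (a * w * inverse (q ^ n)) q n \<noteq> 0"
    and d9: "qpoch (- q) q n \<noteq> 0"
    and d10: "qpoch (inverse w * inverse (q ^ n)) q n \<noteq> 0"
  shows
    "qpoch (w * q^2) (q^2) n * qpoch (inverse a * q^2 * inverse w) (q^2) n
       / (qpoch q (q^2) n * qpoch (inverse a * q^3) (q^2) n)
     = (\<Sum>k\<le>n.
         qpoch (inverse (q^n)) q k * qpoch (- inverse (q^n)) q k
           * qpoch (w * q) q k * qpoch (inverse a * q * inverse w) q k
         / (qpoch q q k * qpoch (inverse (q^(2*n))) q k
            * qpoch (inverse s * r^3) q k * qpoch (- inverse s * r^3) q k)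
         * q ^ k)
     \<and>
     qpoch (w * q^2) (q^2) n * qpoch (a * w * inverse (q^(2*n))) (q^2) n
       / (qpoch (w * q) q n * qpoch (a * w * inverse (q^n)) q n)
     = (\<Sum>k\<le>n.
         qpoch (inverse (q^n)) q k * qpoch (q^(n+1)) q k
           * qpoch (s * inverse (q^n * r)) q k * qpoch (- s * inverse (q^n * r)) q k
         / (qpoch q q k * qpoch (- q) q k
            * qpoch (inverse w * inverse (q^n)) q k * qpoch (a * w * inverse (q^n)) q k)
         * q ^ k)"
proof -
  define e where "e = inverse s * r^3"
  have neg_e: "- inverse s * r^3 = - e" by (simp add: e_def)
  have "e^2 = inverse (s^2) * (r^2)^3"
    by (simp add: e_def power_mult_distrib power_inverse power_mult[symmetric] mult.commute)
  then have e_sq: "e^2 = q^3 * inverse a" using r_sq s_sq by (simp add: mult.commute)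
  have succ: "q^(n+1) = q^n * q" by simp
  from first_identity[OF q_nz a_nz w_nz e_sq d1 d2 d3 d4 d5[folded e_def] d6[unfolded neg_e]]
    second_identity[OF r_sq s_sq q_nz a_nz w_nz d3 d7 d8 d9 d10]
  show ?thesis
    unfolding lhs1_def rhs1_term_def lhs2_def rhs2_term_def neg_e e_def[symmetric] succ
    by (simp add: power2_power)
qed

end
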